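(* Suppose that $X$ is a graph and $p$ is any integer. Then every cellular cycle $\alpha \in Z_1(X;\mathbb{Z}/p\mathbb{Z})$ has a preimage $\tilde \alpha \in Z_1(X;\mathbb{Z})$ such that $\mathrm{Mass}(\tilde \alpha) \leq p\,\mathrm{Mass}(\alpha)$.
   Context: For an integral chain $\sum b_i\Delta_i$, $\mathrm{Mass}=\sum|b_i|$; for a chain with coefficients in $\mathbb{Z}/p\mathbb{Z}$, $\mathrm{Mass}$ is the number of cells in its support. *)

theory Defs
  imports Main
begin

text \<open>A graph (1-dimensional CW complex, loops and multiple edges allowed) is given by
 an edge type 'e, a vertex type 'v, and for every edge a chosen orientation with
 endpoints src e and tgt e.\<close>

definition supp :: "('e \<Rightarrow> int) \<Rightarrow> 'e set" where
  "supp c = {e. c e \<noteq> 0}"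

definition bdry :: "('e \<Rightarrow> 'v) \<Rightarrow> ('e \<Rightarrow> 'v) \<Rightarrow> ('e \<Rightarrow> int) \<Rightarrow> 'v \<Rightarrow> int" where
  "bdry src tgt c v =
     (\<Sum>e\<in>{e\<in>supp c. tgt e = v}. c e) - (\<Sum>e\<in>{e\<in>supp c. src e = v}. c e)"

definition int_cycle :: "('e \<Rightarrow> 'v) \<Rightarrow> ('e \<Rightarrow> 'v) \<Rightarrow> ('e \<Rightarrow> int) \<Rightarrow> bool" where
  "int_cycle src tgt c \<longleftrightarrow> finite (supp c) \<and> (\<forall>v. bdry src tgt c v = 0)"

text \<open>Chains with Z/pZ coefficients are represented by their canonical representatives
 in {0..<p}; such a chain is a cycle iff its integral boundary vanishes mod p.\<close>
definition modp_chain :: "int \<Rightarrow> ('e \<Rightarrow> int) \<Rightarrow> bool" where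
  "modp_chain p a \<longleftrightarrow> finite (supp a) \<and> (\<forall>e. 0 \<le> a e \<and> a e < p)"

definition modp_cycle :: "('e \<Rightarrow> 'v) \<Rightarrow> ('e \<Rightarrow> 'v) \<Rightarrow> int \<Rightarrow> ('e \<Rightarrow> int) \<Rightarrow> bool" where
  "modp_cycle src tgt p a \<longleftrightarrow> modp_chain p a \<and> (\<forall>v. bdry src tgt a v mod p = 0)"

definition mass_int :: "('e \<Rightarrow> int) \<Rightarrow> int" where
  "mass_int c = (\<Sum>e\<in>supp c. \<bar>c e\<bar>)"

definition mass_modp :: "('e \<Rightarrow> int) \<Rightarrow> nat" where
  "mass_modp a = card (supp a)"

end

theory Submission
  imports Defs "HOL-Library.Transitive_Closure_Table"
begin

text \<open>The lift is sought in the form \<open>\<beta> = \<alpha> - p \<cdot> 1\<^sub>S\<close> for a set \<open>S\<close> of edges in the support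
 of \<open>\<alpha>\<close>: any such \<open>\<beta>\<close> reduces to \<open>\<alpha>\<close> mod \<open>p\<close> and has \<open>|\<beta> e| \<le> p\<close>, so only \<open>\<partial>\<beta> = 0\<close> is at
 stake. Since \<open>\<partial>\<alpha> \<equiv> 0\<close> mod \<open>p\<close>, \<open>\<partial>\<beta>\<close> is divisible by \<open>p\<close> and sums to zero. Choose \<open>S\<close>
 minimising \<open>\<Sum>\<^sub>v |\<partial>\<beta>(v)|\<close>. If \<open>\<partial>\<beta>(v) > 0\<close>, the vertices reachable from \<open>v\<close> in the residual
 graph of \<open>S\<close> cannot all have \<open>\<partial>\<beta> \<ge> 0\<close>, because \<open>\<Sum>\<^sub>u\<^sub>\<in>\<^sub>R \<partial>\<beta>(u) \<le> 0\<close> for every residually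
 closed set \<open>R\<close> (this is where \<open>0 \<le> \<alpha> < p\<close> enters). Toggling the edges of a simple residual path
 from \<open>v\<close> to a vertex \<open>w\<close> with \<open>\<partial>\<beta>(w) < 0\<close> changes \<open>\<partial>\<beta>\<close> by \<open>-p(\<delta>\<^sub>v - \<delta>\<^sub>w)\<close>, which strictly
 decreases the minimised quantity.\<close>

definition incidence :: "('e \<Rightarrow> 'v) \<Rightarrow> ('e \<Rightarrow> 'v) \<Rightarrow> 'e \<Rightarrow> 'v \<Rightarrow> int" where
  "incidence s t e v = of_bool (t e = v) - of_bool (s e = v)"

definition chain_bdry :: "('e \<Rightarrow> 'v) \<Rightarrow> ('e \<Rightarrow> 'v) \<Rightarrow> 'e set \<Rightarrow> ('e \<Rightarrow> int) \<Rightarrow> 'v \<Rightarrow> int" where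
  "chain_bdry s t A c v = (\<Sum>e\<in>A. c e * incidence s t e v)"

lemma bdry_eq_chain_bdry:
  assumes "finite A" "supp c \<subseteq> A"
  shows "bdry s t c v = chain_bdry s t A c v"
proof -
  have "chain_bdry s t A c v = chain_bdry s t (supp c) c v"
    unfolding chain_bdry_def by (rule sum.mono_neutral_right) (use assms in \<open>auto simp: supp_def\<close>)
  also have "\<dots> = bdry s t c v"
    unfolding bdry_def chain_bdry_def incidence_def
    by (simp only: sum.inter_filter[OF finite_subset[OF assms(2,1)]])
      (auto simp: right_diff_distrib sum_subtractf intro!: arg_cong2[where f = minus] sum.cong)
  finally show ?thesis ..
qed

lemma sum_incidence:
  assumes "finite R"
  shows "(\<Sum>v\<in>R. incidence s t e v) = of_bool (t e \<in> R) - of_bool (s e \<in> R)"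
  using assms by (simp add: incidence_def sum_subtractf of_bool_def sum.delta')

lemma sum_chain_bdry:
  assumes "finite R"
  shows "(\<Sum>v\<in>R. chain_bdry s t A c v) = (\<Sum>e\<in>A. c e * (of_bool (t e \<in> R) - of_bool (s e \<in> R)))"
proof -
  have "(\<Sum>v\<in>R. chain_bdry s t A c v) = (\<Sum>e\<in>A. c e * (\<Sum>v\<in>R. incidence s t e v))"
    unfolding chain_bdry_def sum_distrib_left by (rule sum.swap)
  then show ?thesis
    by (simp add: sum_incidence[OF assms])
qed

lemma chain_bdry_eq_0_off_endpoints:
  assumes "v \<notin> s ` A \<union> t ` A"
  shows "chain_bdry s t A c v = 0"
  using assms by (auto simp: chain_bdry_def incidence_def intro!: sum.neutral)

lemma sum_chain_bdry_endpoints: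
  assumes "finite A"
  shows "(\<Sum>v \<in> s ` A \<union> t ` A. chain_bdry s t A c v) = 0"
  using assms by (simp add: sum_chain_bdry)

lemma exists_chain_bdry_pos:
  assumes "finite A" "chain_bdry s t A c u \<noteq> 0"
  shows "\<exists>v \<in> s ` A \<union> t ` A. chain_bdry s t A c v > 0"
proof (rule ccontr)
  define V where "V = s ` A \<union> t ` A"
  assume "\<not> ?thesis"
  then have "\<forall>v\<in>V. - chain_bdry s t A c v \<ge> 0" by (simp add: V_def not_less)
  moreover have "(\<Sum>v\<in>V. - chain_bdry s t A c v) = 0"
    using sum_chain_bdry_endpoints[OF \<open>finite A\<close>] by (simp add: V_def sum_negf)
  ultimately have "\<forall>v\<in>V. chain_bdry s t A c v = 0"
    using sum_nonneg_eq_0_iff[of V "\<lambda>v. - chain_bdry s t A c v"] \<open>finite A\<close> by (simp add: V_def)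
  then show False
    using assms(2) chain_bdry_eq_0_off_endpoints[of u s A t c] by (auto simp: V_def)
qed

text \<open>Following a residual step from \<open>x\<close> to \<open>y\<close> and toggling the membership of its edge in \<open>S\<close>
 adds \<open>\<delta>\<^sub>x - \<delta>\<^sub>y\<close> to the boundary of \<open>1\<^sub>S\<close>.\<close>
definition residual_step :: "('e \<Rightarrow> 'v) \<Rightarrow> ('e \<Rightarrow> 'v) \<Rightarrow> 'e set \<Rightarrow> 'e set \<Rightarrow> 'v \<Rightarrow> 'v \<Rightarrow> bool" where
  "residual_step s t A S x y \<longleftrightarrow>
     (\<exists>e\<in>A. if e \<in> S then s e = x \<and> t e = y else t e = x \<and> s e = y)"

text \<open>The invariant on untouched edges guarantees, along a path without repeated vertices, that
 no edge is toggled twice.\<close>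
lemma augment_along_distinct_path:
  assumes "rtrancl_path (residual_step s t A S) x xs y" "distinct (x # xs)"
    and "finite A" "S \<subseteq> A"
  shows "\<exists>S'. S' \<subseteq> A
    \<and> (\<forall>e. s e \<notin> set (x # xs) \<or> t e \<notin> set (x # xs) \<longrightarrow> (e \<in> S' \<longleftrightarrow> e \<in> S))
    \<and> (\<forall>u. chain_bdry s t S' (\<lambda>_. 1) u
            = chain_bdry s t S (\<lambda>_. 1) u + of_bool (u = x) - of_bool (u = y))"
  using assms(1,2)
proof (induction rule: rtrancl_path.induct)
  case (base x)
  show ?case using \<open>S \<subseteq> A\<close> by auto
next
  case (step x z zs y)
  obtain S'' where "S'' \<subseteq> A"
    and agree: "\<forall>e. s e \<notin> set (z # zs) \<or> t e \<notin> set (z # zs) \<longrightarrow> (e \<in> S'' \<longleftrightarrow> e \<in> S)"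
    and bdry_S'': "\<forall>u. chain_bdry s t S'' (\<lambda>_. 1) u
                      = chain_bdry s t S (\<lambda>_. 1) u + of_bool (u = z) - of_bool (u = y)"
    using step.IH step.prems by auto
  have fin: "finite S''" using \<open>S'' \<subseteq> A\<close> \<open>finite A\<close> finite_subset by blast
  obtain e where "e \<in> A" and e: "if e \<in> S then s e = x \<and> t e = z else t e = x \<and> s e = z"
    using step.hyps(1) unfolding residual_step_def by blast
  have "x \<notin> set (z # zs)" using step.prems by simp
  then have "e \<in> S'' \<longleftrightarrow> e \<in> S" using agree e by (metis (full_types))
  define S' where "S' = (if e \<in> S then S'' - {e} else insert e S'')"
  have "S' \<subseteq> A" using \<open>S'' \<subseteq> A\<close> \<open>e \<in> A\<close> by (auto simp: S'_def)
  moreover have "\<forall>e'. s e' \<notin> set (x # z # zs) \<or> t e' \<notin> set (x # z # zs) \<longrightarrow> (e' \<in> S' \<longleftrightarrow> e' \<in> S)"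
    using agree e by (auto simp: S'_def split: if_splits)
  moreover have "chain_bdry s t S' (\<lambda>_. 1) u
      = chain_bdry s t S (\<lambda>_. 1) u + of_bool (u = x) - of_bool (u = y)" for u
  proof (cases "e \<in> S")
    case True
    then have "chain_bdry s t S' (\<lambda>_. 1) u = chain_bdry s t S'' (\<lambda>_. 1) u - incidence s t e u"
      using fin \<open>e \<in> S'' \<longleftrightarrow> e \<in> S\<close> by (simp add: S'_def chain_bdry_def sum.remove)
    then show ?thesis using True e bdry_S'' by (simp add: incidence_def)
  next
    case False
    then have "chain_bdry s t S' (\<lambda>_. 1) u = chain_bdry s t S'' (\<lambda>_. 1) u + incidence s t e u"
      using fin \<open>e \<in> S'' \<longleftrightarrow> e \<in> S\<close> by (simp add: S'_def chain_bdry_def)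
    then show ?thesis using False e bdry_S'' by (simp add: incidence_def)
  qed
  ultimately show ?case by blast
qed

lemma augment_along_residual_path:
  assumes "(residual_step s t A S)\<^sup>*\<^sup>* x y" "finite A" "S \<subseteq> A"
  obtains S' where "S' \<subseteq> A"
    and "\<And>u. chain_bdry s t S' (\<lambda>_. 1) u
            = chain_bdry s t S (\<lambda>_. 1) u + of_bool (u = x) - of_bool (u = y)"
proof -
  obtain xs where "rtrancl_path (residual_step s t A S) x xs y"
    using assms(1) by (auto simp: rtranclp_eq_rtrancl_path)
  then obtain xs' where "rtrancl_path (residual_step s t A S) x xs' y" "distinct (x # xs')"
    by (rule rtrancl_path_distinct)
  from augment_along_distinct_path[OF this assms(2,3)] that show ?thesis by blast
qed

definition lift_chain :: "int \<Rightarrow> ('e \<Rightarrow> int) \<Rightarrow> 'e set \<Rightarrow> 'e \<Rightarrow> int" where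
  "lift_chain p \<alpha> S e = \<alpha> e - p * of_bool (e \<in> S)"

lemma chain_bdry_lift_chain:
  assumes "finite A" "S \<subseteq> A"
  shows "chain_bdry s t A (lift_chain p \<alpha> S) v = chain_bdry s t A \<alpha> v - p * chain_bdry s t S (\<lambda>_. 1) v"
proof -
  have "chain_bdry s t S (\<lambda>_. 1) v = (\<Sum>e\<in>A. of_bool (e \<in> S) * incidence s t e v)"
    unfolding chain_bdry_def by (rule sum.mono_neutral_cong_left) (use assms in auto)
  then show ?thesis
    by (simp add: chain_bdry_def lift_chain_def left_diff_distrib sum_subtractf sum_distrib_left mult.assoc)
qed

lemma lift_chain_mod:
  assumes "0 \<le> \<alpha> e" "\<alpha> e < p"
  shows "lift_chain p \<alpha> S e mod p = \<alpha> e"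
  using assms by (simp add: lift_chain_def)

lemma abs_lift_chain_le:
  assumes "0 \<le> \<alpha> e" "\<alpha> e \<le> p"
  shows "\<bar>lift_chain p \<alpha> S e\<bar> \<le> p"
  using assms by (simp add: lift_chain_def)

lemma supp_lift_chain:
  assumes "S \<subseteq> supp \<alpha>"
  shows "supp (lift_chain p \<alpha> S) \<subseteq> supp \<alpha>"
  using assms by (auto simp: lift_chain_def supp_def)

lemma sum_chain_bdry_lift_chain_closed_nonpos:
  assumes "finite R" and range: "\<forall>e\<in>A. 0 \<le> \<alpha> e \<and> \<alpha> e \<le> p"
    and closed: "\<And>x y. x \<in> R \<Longrightarrow> residual_step s t A S x y \<Longrightarrow> y \<in> R"
  shows "(\<Sum>v\<in>R. chain_bdry s t A (lift_chain p \<alpha> S) v) \<le> 0"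
  unfolding sum_chain_bdry[OF \<open>finite R\<close>]
proof (rule sum_nonpos)
  fix e assume "e \<in> A"
  have "e \<in> S" if "t e \<in> R" "s e \<notin> R"
    using closed[OF \<open>t e \<in> R\<close>, of "s e"] that \<open>e \<in> A\<close> unfolding residual_step_def by force
  moreover have "e \<notin> S" if "s e \<in> R" "t e \<notin> R"
    using closed[OF \<open>s e \<in> R\<close>, of "t e"] that \<open>e \<in> A\<close> unfolding residual_step_def by force
  ultimately show "lift_chain p \<alpha> S e * (of_bool (t e \<in> R) - of_bool (s e \<in> R)) \<le> 0"
    using range \<open>e \<in> A\<close> by (auto simp: lift_chain_def)
qed

lemma residual_path_to_negative_bdry:
  assumes "finite A" "\<forall>e\<in>A. 0 \<le> \<alpha> e \<and> \<alpha> e \<le> p"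
    and "chain_bdry s t A (lift_chain p \<alpha> S) v > 0"
  obtains w where "(residual_step s t A S)\<^sup>*\<^sup>* v w" "chain_bdry s t A (lift_chain p \<alpha> S) w < 0"
proof (rule ccontr)
  assume no_negative: "\<not> thesis"
  define R where "R = {w. (residual_step s t A S)\<^sup>*\<^sup>* v w}"
  have "R \<subseteq> insert v (s ` A \<union> t ` A)"
  proof
    fix w assume "w \<in> R"
    then have "(residual_step s t A S)\<^sup>*\<^sup>* v w" by (simp add: R_def)
    then show "w \<in> insert v (s ` A \<union> t ` A)"
      by (induction rule: rtranclp_induct) (auto simp: residual_step_def split: if_splits)
  qed
  then have "finite R" using \<open>finite A\<close> finite_subset by blast
  have "0 < (\<Sum>w\<in>R. chain_bdry s t A (lift_chain p \<alpha> S) w)"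
    using no_negative that assms(3) \<open>finite R\<close>
    by (intro sum_pos2[of R v]) (auto simp: R_def intro!: leI)
  moreover have "(\<Sum>w\<in>R. chain_bdry s t A (lift_chain p \<alpha> S) w) \<le> 0"
    using \<open>finite R\<close> assms(2)
    by (rule sum_chain_bdry_lift_chain_closed_nonpos) (auto simp: R_def intro: rtranclp.rtrancl_into_rtrancl)
  ultimately show False by simp
qed

definition lift_defect :: "('e \<Rightarrow> 'v) \<Rightarrow> ('e \<Rightarrow> 'v) \<Rightarrow> 'e set \<Rightarrow> int \<Rightarrow> ('e \<Rightarrow> int) \<Rightarrow> 'e set \<Rightarrow> int" where
  "lift_defect s t A p \<alpha> S = (\<Sum>v \<in> s ` A \<union> t ` A. \<bar>chain_bdry s t A (lift_chain p \<alpha> S) v\<bar>)"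

lemma lift_defect_decrease:
  assumes "finite A" "p > 0" and range: "\<forall>e\<in>A. 0 \<le> \<alpha> e \<and> \<alpha> e \<le> p"
    and dvd: "\<And>v. p dvd chain_bdry s t A \<alpha> v" and "S \<subseteq> A"
    and "chain_bdry s t A (lift_chain p \<alpha> S) u \<noteq> 0"
  obtains S' where "S' \<subseteq> A" "lift_defect s t A p \<alpha> S' < lift_defect s t A p \<alpha> S"
proof -
  define V where "V = s ` A \<union> t ` A"
  define c where "c S v = chain_bdry s t A (lift_chain p \<alpha> S) v" for S v
  have "finite V" using \<open>finite A\<close> by (simp add: V_def)
  have c_dvd: "p dvd c S v" for v
    using dvd[of v] by (simp add: c_def chain_bdry_lift_chain[OF \<open>finite A\<close> \<open>S \<subseteq> A\<close>])
  have "\<exists>v\<in>V. c S v > 0"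
    using exists_chain_bdry_pos[OF \<open>finite A\<close> assms(6)] by (simp add: c_def V_def)
  then obtain v where "v \<in> V" "c S v > 0" by blast
  from \<open>c S v > 0\<close> obtain w where path: "(residual_step s t A S)\<^sup>*\<^sup>* v w" and "c S w < 0"
    unfolding c_def by (rule residual_path_to_negative_bdry[OF \<open>finite A\<close> range])
  obtain S' where "S' \<subseteq> A" and S': "\<And>x. chain_bdry s t S' (\<lambda>_. 1) x
            = chain_bdry s t S (\<lambda>_. 1) x + of_bool (x = v) - of_bool (x = w)"
    using augment_along_residual_path[OF path \<open>finite A\<close> \<open>S \<subseteq> A\<close>] by metis
  have c_S': "c S' x = c S x - p * (of_bool (x = v) - of_bool (x = w))" for x
    unfolding c_def chain_bdry_lift_chain[OF \<open>finite A\<close> \<open>S \<subseteq> A\<close>]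
      chain_bdry_lift_chain[OF \<open>finite A\<close> \<open>S' \<subseteq> A\<close>] S'
    by (simp add: algebra_simps)
  have "p \<le> c S v" "p \<le> - c S w"
    using c_dvd[of v] c_dvd[of w] \<open>c S v > 0\<close> \<open>c S w < 0\<close> by (simp_all add: zdvd_imp_le)
  have "v \<noteq> w" using \<open>c S v > 0\<close> \<open>c S w < 0\<close> by auto
  have "\<bar>c S' x\<bar> \<le> \<bar>c S x\<bar>" for x
    using \<open>p > 0\<close> \<open>p \<le> c S v\<close> \<open>p \<le> - c S w\<close> \<open>v \<noteq> w\<close> by (cases "x = v"; cases "x = w") (simp_all add: c_S')
  moreover have "\<bar>c S' v\<bar> < \<bar>c S v\<bar>"
    using \<open>p \<le> c S v\<close> \<open>p > 0\<close> \<open>v \<noteq> w\<close> by (simp add: c_S')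
  ultimately have "(\<Sum>x\<in>V. \<bar>c S' x\<bar>) < (\<Sum>x\<in>V. \<bar>c S x\<bar>)"
    using \<open>finite V\<close> \<open>v \<in> V\<close> by (intro sum_strict_mono_ex1) auto
  then show ?thesis
    by (intro that[OF \<open>S' \<subseteq> A\<close>]) (simp add: lift_defect_def c_def V_def)
qed

lemma exists_lift_chain_cycle:
  assumes "finite A" "p > 0" "\<forall>e\<in>A. 0 \<le> \<alpha> e \<and> \<alpha> e \<le> p" "\<And>v. p dvd chain_bdry s t A \<alpha> v"
  obtains S where "S \<subseteq> A" "\<And>v. chain_bdry s t A (lift_chain p \<alpha> S) v = 0"
proof -
  define S where "S = arg_min_on (lift_defect s t A p \<alpha>) (Pow A)"
  have "S \<subseteq> A" and minimal: "\<not> (\<exists>S'\<in>Pow A. lift_defect s t A p \<alpha> S' < lift_defect s t A p \<alpha> S)"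
    using arg_min_if_finite[of "Pow A" "lift_defect s t A p \<alpha>"] \<open>finite A\<close> by (auto simp: S_def)
  have "chain_bdry s t A (lift_chain p \<alpha> S) v = 0" for v
  proof (rule ccontr)
    assume "chain_bdry s t A (lift_chain p \<alpha> S) v \<noteq> 0"
    then obtain S' where "S' \<subseteq> A" "lift_defect s t A p \<alpha> S' < lift_defect s t A p \<alpha> S"
      by (rule lift_defect_decrease[OF assms \<open>S \<subseteq> A\<close>])
    with minimal show False by blast
  qed
  with \<open>S \<subseteq> A\<close> show ?thesis by (rule that)
qed

lemma mass_int_le:
  assumes "finite A" "supp c \<subseteq> A" "\<forall>e\<in>A. \<bar>c e\<bar> \<le> p"
  shows "mass_int c \<le> p * int (card A)"
proof -
  have "mass_int c \<le> (\<Sum>e\<in>A. \<bar>c e\<bar>)"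
    unfolding mass_int_def using assms(1,2) by (rule sum_mono2) auto
  also have "\<dots> \<le> (\<Sum>e\<in>A. p)"
    using assms(3) by (intro sum_mono) auto
  finally show ?thesis by (simp add: mult.commute)
qed

theorem proposition2p1:
  fixes src tgt :: "'e \<Rightarrow> 'v" and p :: int and \<alpha> :: "'e \<Rightarrow> int"
  assumes "p \<ge> 1"
    and "modp_cycle src tgt p \<alpha>"
  shows "\<exists>\<beta>. int_cycle src tgt \<beta> \<and> (\<forall>e. \<beta> e mod p = \<alpha> e)
              \<and> mass_int \<beta> \<le> p * int (mass_modp \<alpha>)"
proof -
  define A where "A = supp \<alpha>"
  have "finite A" and range: "\<And>e. 0 \<le> \<alpha> e \<and> \<alpha> e < p"
    and "\<And>v. p dvd bdry src tgt \<alpha> v"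
    using assms(2) by (auto simp: A_def modp_cycle_def modp_chain_def dvd_eq_mod_eq_0)
  then have "p dvd chain_bdry src tgt A \<alpha> v" for v
    by (simp add: A_def bdry_eq_chain_bdry)
  moreover have "\<forall>e\<in>A. 0 \<le> \<alpha> e \<and> \<alpha> e \<le> p"
    using range by (simp add: less_imp_le)
  moreover have "p > 0" using assms(1) by simp
  ultimately obtain S where "S \<subseteq> A" and cycle: "\<And>v. chain_bdry src tgt A (lift_chain p \<alpha> S) v = 0"
    using exists_lift_chain_cycle[OF \<open>finite A\<close>] by metis
  have supp: "supp (lift_chain p \<alpha> S) \<subseteq> A"
    using supp_lift_chain \<open>S \<subseteq> A\<close> by (simp add: A_def)
  have "int_cycle src tgt (lift_chain p \<alpha> S)"
    using finite_subset[OF supp \<open>finite A\<close>] cycle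
    by (simp add: int_cycle_def bdry_eq_chain_bdry[OF \<open>finite A\<close> supp])
  moreover have "\<forall>e. lift_chain p \<alpha> S e mod p = \<alpha> e"
    using range by (simp add: lift_chain_mod)
  moreover have "mass_int (lift_chain p \<alpha> S) \<le> p * int (mass_modp \<alpha>)"
    unfolding mass_modp_def A_def[symmetric]
    using range by (intro mass_int_le[OF \<open>finite A\<close> supp]) (simp add: abs_lift_chain_le less_imp_le)
  ultimately show ?thesis by (intro exI[of _ "lift_chain p \<alpha> S"] conjI)
qed

end
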